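(* For every $\mathsf{T_{z}S}$-closed semigroup $X$, its center $Z(X)$ is chain-finite.
   Context: $\mathsf{T_{z}S}$ is the class of Hausdorff zero-dimensional topological semigroups. A semigroup $X$ is $\mathsf{T_{z}S}$-closed if for every isomorphic topological embedding of $X$ (discrete topology) into some $Y\in\mathsf{T_{z}S}$ the image is closed in $Y$. $Z(X)=\{z\in X:\forall x\in X\ (xz=zx)\}$. A subset $C$ is a chain if $xy\in\{x,y\}$ for $x,y\in C$; a semigroup is chain-finite if it contains no infinite chain. *)

theory Defs
  imports "HOL-Analysis.Analysis"
begin

definition topological_semigroup :: "'b topology \<Rightarrow> ('b \<Rightarrow> 'b \<Rightarrow> 'b) \<Rightarrow> bool" where
  "topological_semigroup T m \<longleftrightarrow>
     (\<forall>x\<in>topspace T. \<forall>y\<in>topspace T. m x y \<in> topspace T) \<and>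
     (\<forall>x\<in>topspace T. \<forall>y\<in>topspace T. \<forall>z\<in>topspace T. m (m x y) z = m x (m y z)) \<and>
     continuous_map (prod_topology T T) T (\<lambda>(x, y). m x y)"

definition TzS_semigroup :: "'b topology \<Rightarrow> ('b \<Rightarrow> 'b \<Rightarrow> 'b) \<Rightarrow> bool" where
  "TzS_semigroup T m \<longleftrightarrow> topological_semigroup T m \<and> Hausdorff_space T \<and> T dim_le 0"

definition TzS_closed_in :: "'b itself \<Rightarrow> 'a::semigroup_mult itself \<Rightarrow> bool" where
  "TzS_closed_in B A \<longleftrightarrow>
     (\<forall>(T::'b topology) m (h::'a \<Rightarrow> 'b).
        TzS_semigroup T m \<and> inj h \<and> range h \<subseteq> topspace T \<and>
        (\<forall>x y. h (x * y) = m (h x) (h y)) \<and>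
        embedding_map (discrete_topology UNIV) T h
        \<longrightarrow> closedin T (range h))"

text \<open>The target semigroups Y are taken with
  carrier in the type 'a set set; this is no loss of generality: WLOG Y is the
  closure of the image of X, and a Hausdorff space with a dense subset D injects
  into Pow (Pow D).\<close>
definition TzS_closed :: "'a::semigroup_mult itself \<Rightarrow> bool" where
  "TzS_closed A \<longleftrightarrow> TzS_closed_in TYPE('a set set) A"

definition center :: "'a::semigroup_mult set" where
  "center = {z. \<forall>x. x * z = z * x}"

definition is_chain :: "'a::times set \<Rightarrow> bool" where
  "is_chain C \<longleftrightarrow> (\<forall>x\<in>C. \<forall>y\<in>C. x * y \<in> {x, y})"

definition chain_finite :: "'a::times set \<Rightarrow> bool" where
  "chain_finite S \<longleftrightarrow> \<not> (\<exists>C. C \<subseteq> S \<and> is_chain C \<and> infinite C)"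

end

theory Submission
  imports Defs "HOL-Library.Ramsey"
begin

text \<open>
  Suppose the centre contains an infinite chain. By Ramsey's theorem it contains an injective
  sequence of idempotents e with e i * e j = e (min i j) for all i, j, or e i * e j = e (max i j)
  for all i, j. Call a sequence s absorbing if s i * e j = s (sel i j), where sel is min or max
  accordingly; e and all sequences a * e are absorbing. The tail filters of the absorbing and
  the constant sequences form a semigroup under the pointwise product of set systems, the
  constant sequences giving a copy of X as the principal ultrafilters. Any two such sequences
  multiply along one of four index patterns (first index, second index, min, max), which makes
  the product continuous for the topology in which principal points are isolated and a free tail
  filter F has the neighbourhoods {F} together with the principal points of some A \<in> F. This
  topology is Hausdorff and zero-dimensional because a free tail filter of an absorbing
  sequence contains the complement of the range of every sequence with another tail filter.
  The tail filter of e lies in the closure of X, so X is not closed in this semigroup.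
\<close>

definition principal_sets :: "'a \<Rightarrow> 'a set set" where
  "principal_sets x = {A. x \<in> A}"

definition tail_sets :: "(nat \<Rightarrow> 'a) \<Rightarrow> 'a set set" where
  "tail_sets s = {A. eventually (\<lambda>j. s j \<in> A) sequentially}"

definition sets_mult :: "'a::times set set \<Rightarrow> 'a set set \<Rightarrow> 'a set set" where
  "sets_mult F G = {A. \<exists>P\<in>F. \<exists>Q\<in>G. \<forall>p\<in>P. \<forall>q\<in>Q. p * q \<in> A}"

definition basic_nbhd :: "'a set set \<Rightarrow> 'a set \<Rightarrow> 'a set set set" where
  "basic_nbhd F A = insert F (if F \<in> range principal_sets then {} else principal_sets ` A)"

lemma mem_principal_sets [simp]: "A \<in> principal_sets x \<longleftrightarrow> x \<in> A"
  by (simp add: principal_sets_def)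

lemma principal_sets_eq_iff [simp]: "principal_sets x = principal_sets y \<longleftrightarrow> x = y"
  by (metis mem_principal_sets singletonD singletonI)

lemma inj_principal_sets: "inj principal_sets"
  by (simp add: inj_def)

lemma mem_tail_sets: "A \<in> tail_sets s \<longleftrightarrow> (\<exists>K. \<forall>j\<ge>K. s j \<in> A)"
  by (simp add: tail_sets_def eventually_sequentially)

lemma tail_sets_const: "tail_sets (\<lambda>_. x) = principal_sets x"
  by (simp add: tail_sets_def principal_sets_def)

lemma tail_sets_cong:
  assumes "eventually (\<lambda>j. s j = t j) sequentially"
  shows "tail_sets s = tail_sets t"
  unfolding tail_sets_def using assms by (auto elim: eventually_elim2)

lemma tail_sets_eq_principal_sets_iff:
  "tail_sets s = principal_sets x \<longleftrightarrow> eventually (\<lambda>j. s j = x) sequentially"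
proof
  assume "tail_sets s = principal_sets x"
  then have "{x} \<in> tail_sets s" by simp
  then show "eventually (\<lambda>j. s j = x) sequentially" by (simp add: tail_sets_def)
qed (simp add: tail_sets_cong tail_sets_const[symmetric])

lemma image_atLeast_mem_tail_sets: "s ` {K..} \<in> tail_sets s"
  by (auto simp: mem_tail_sets)

lemma UNIV_mem_tail_sets: "UNIV \<in> tail_sets s"
  by (simp add: tail_sets_def)

lemma empty_not_mem_tail_sets: "{} \<notin> tail_sets s"
  by (simp add: tail_sets_def)

lemma Int_mem_tail_sets: "A \<in> tail_sets s \<Longrightarrow> B \<in> tail_sets s \<Longrightarrow> A \<inter> B \<in> tail_sets s"
  by (simp add: tail_sets_def eventually_conj)

lemma tail_sets_reindex:
  assumes "(\<forall>i\<ge>j. h i = j) \<or> (\<forall>i\<ge>j. h i = i)"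
  shows "tail_sets (\<lambda>i. w (h i)) \<in> {principal_sets (w j), tail_sets w}"
  using assms
proof
  assume "\<forall>i\<ge>j. h i = j"
  then have "tail_sets (\<lambda>i. w (h i)) = tail_sets (\<lambda>_. w j)"
    by (intro tail_sets_cong) (auto simp: eventually_sequentially intro!: exI[of _ j])
  then show ?thesis by (simp add: tail_sets_const)
next
  assume "\<forall>i\<ge>j. h i = i"
  then have "tail_sets (\<lambda>i. w (h i)) = tail_sets w"
    by (intro tail_sets_cong) (auto simp: eventually_sequentially intro!: exI[of _ j])
  then show ?thesis by simp
qed

lemma sets_mult_tail_sets:
  assumes "\<And>i j. u i * v j \<in> {u i * v i, u j * v j}"
  shows "sets_mult (tail_sets u) (tail_sets v) = tail_sets (\<lambda>j. u j * v j)"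
proof (intro set_eqI iffI)
  fix A assume "A \<in> sets_mult (tail_sets u) (tail_sets v)"
  then obtain P Q where "eventually (\<lambda>j. u j \<in> P) sequentially" "eventually (\<lambda>j. v j \<in> Q) sequentially"
    and "\<forall>p\<in>P. \<forall>q\<in>Q. p * q \<in> A"
    by (auto simp: sets_mult_def tail_sets_def)
  then show "A \<in> tail_sets (\<lambda>j. u j * v j)"
    by (auto simp: tail_sets_def elim: eventually_elim2)
next
  fix A assume "A \<in> tail_sets (\<lambda>j. u j * v j)"
  then obtain K where K: "\<And>j. j \<ge> K \<Longrightarrow> u j * v j \<in> A"
    by (auto simp: mem_tail_sets)
  have "\<forall>p\<in>u ` {K..}. \<forall>q\<in>v ` {K..}. p * q \<in> A"
  proof (intro ballI)
    fix p q assume "p \<in> u ` {K..}" "q \<in> v ` {K..}"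
    then obtain i j where "i \<ge> K" "j \<ge> K" "p = u i" "q = v j" by auto
    then show "p * q \<in> A" using K assms[of i j] by auto
  qed
  then show "A \<in> sets_mult (tail_sets u) (tail_sets v)"
    unfolding sets_mult_def using image_atLeast_mem_tail_sets by blast
qed

lemma sets_mult_principal_sets:
  "sets_mult (principal_sets x) (principal_sets y) = principal_sets (x * y)"
  using sets_mult_tail_sets[of "\<lambda>_. x" "\<lambda>_. y"] by (simp add: tail_sets_const)

lemma sets_mult_tail_sets_principal_sets:
  "sets_mult (tail_sets u) (principal_sets y) = tail_sets (\<lambda>i. u i * y)"
  using sets_mult_tail_sets[of u "\<lambda>_. y"] by (simp add: tail_sets_const)

lemma sets_mult_principal_sets_tail_sets:
  "sets_mult (principal_sets x) (tail_sets v) = tail_sets (\<lambda>j. x * v j)"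
  using sets_mult_tail_sets[of "\<lambda>_. x" v] by (simp add: tail_sets_const)

lemma mem_basic_nbhd:
  "G \<in> basic_nbhd F A \<longleftrightarrow> G = F \<or> (F \<notin> range principal_sets \<and> (\<exists>x\<in>A. G = principal_sets x))"
  by (auto simp: basic_nbhd_def)

lemma basic_nbhd_principal_sets [simp]: "basic_nbhd (principal_sets x) A = {principal_sets x}"
  by (simp add: basic_nbhd_def)

lemma basic_nbhd_mono: "A \<subseteq> B \<Longrightarrow> basic_nbhd F A \<subseteq> basic_nbhd F B"
  by (auto simp: basic_nbhd_def)

lemma basic_nbhd_disjoint:
  assumes "F \<noteq> G" "A \<in> F" "B \<in> G" "A \<inter> B = {}"
  shows "basic_nbhd F A \<inter> basic_nbhd G B = {}"
  using assms by (auto simp: basic_nbhd_def disjoint_iff)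

lemma eventually_principal_sets_mem_basic_nbhd:
  assumes "A \<in> tail_sets w"
  shows "\<exists>K. \<forall>k\<ge>K. principal_sets (w k) \<in> basic_nbhd (tail_sets w) A"
proof (cases "tail_sets w \<in> range principal_sets")
  case True
  then obtain c where c: "tail_sets w = principal_sets c" by blast
  then obtain K where "\<forall>k\<ge>K. w k = c"
    by (auto simp: tail_sets_eq_principal_sets_iff eventually_sequentially)
  then show ?thesis using c by (auto simp: mem_basic_nbhd)
next
  case False
  from assms obtain K where "\<forall>k\<ge>K. w k \<in> A" by (auto simp: mem_tail_sets)
  then show ?thesis using False by (auto simp: mem_basic_nbhd)
qed

definition filter_topology :: "'a set set set \<Rightarrow> 'a set set topology" where
  "filter_topology Y = topology (\<lambda>U. U \<subseteq> Y \<and> (\<forall>F\<in>U. \<exists>A\<in>F. basic_nbhd F A \<subseteq> U))"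

locale filter_space =
  fixes Y :: "'a set set set"
  assumes UNIV_mem: "F \<in> Y \<Longrightarrow> UNIV \<in> F"
    and empty_not_mem: "F \<in> Y \<Longrightarrow> {} \<notin> F"
    and Int_mem: "F \<in> Y \<Longrightarrow> A \<in> F \<Longrightarrow> B \<in> F \<Longrightarrow> A \<inter> B \<in> F"
    and principal_sets_mem: "principal_sets x \<in> Y"
    and free: "F \<in> Y \<Longrightarrow> F \<noteq> principal_sets x \<Longrightarrow> - {x} \<in> F"
    and separating: "F \<in> Y \<Longrightarrow> F \<notin> range principal_sets \<Longrightarrow>
      \<exists>A\<in>F. \<forall>G\<in>Y. G \<notin> range principal_sets \<longrightarrow> G \<noteq> F \<longrightarrow> - A \<in> G"
begin

lemma basic_nbhd_subset: "F \<in> Y \<Longrightarrow> basic_nbhd F A \<subseteq> Y"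
  by (auto simp: mem_basic_nbhd principal_sets_mem)

lemma istopology_basic_nbhd_opens:
  "istopology (\<lambda>U. U \<subseteq> Y \<and> (\<forall>F\<in>U. \<exists>A\<in>F. basic_nbhd F A \<subseteq> U))"
  unfolding istopology_def
proof (intro conjI allI impI)
  fix S T :: "'a set set set"
  assume S: "S \<subseteq> Y \<and> (\<forall>F\<in>S. \<exists>A\<in>F. basic_nbhd F A \<subseteq> S)"
    and T: "T \<subseteq> Y \<and> (\<forall>F\<in>T. \<exists>A\<in>F. basic_nbhd F A \<subseteq> T)"
  show "S \<inter> T \<subseteq> Y" using S by blast
  show "\<forall>F\<in>S \<inter> T. \<exists>A\<in>F. basic_nbhd F A \<subseteq> S \<inter> T"
  proof
    fix F assume F: "F \<in> S \<inter> T"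
    obtain A where A: "A \<in> F" "basic_nbhd F A \<subseteq> S"
      using S F by (meson IntD1)
    obtain B where B: "B \<in> F" "basic_nbhd F B \<subseteq> T"
      using T F by (meson IntD2)
    have "A \<inter> B \<in> F" using F S A(1) B(1) Int_mem by blast
    moreover have "basic_nbhd F (A \<inter> B) \<subseteq> S \<inter> T"
      using A(2) B(2) basic_nbhd_mono[of "A \<inter> B" A F] basic_nbhd_mono[of "A \<inter> B" B F] by blast
    ultimately show "\<exists>A\<in>F. basic_nbhd F A \<subseteq> S \<inter> T" by blast
  qed
next
  fix K :: "'a set set set set"
  assume K: "\<forall>U\<in>K. U \<subseteq> Y \<and> (\<forall>F\<in>U. \<exists>A\<in>F. basic_nbhd F A \<subseteq> U)"
  then show "\<Union>K \<subseteq> Y" by blast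
  show "\<forall>F\<in>\<Union>K. \<exists>A\<in>F. basic_nbhd F A \<subseteq> \<Union>K"
  proof
    fix F assume "F \<in> \<Union>K"
    then obtain U where "U \<in> K" "F \<in> U" by blast
    with K obtain A where "A \<in> F" "basic_nbhd F A \<subseteq> U" by blast
    with \<open>U \<in> K\<close> show "\<exists>A\<in>F. basic_nbhd F A \<subseteq> \<Union>K" by blast
  qed
qed

lemma openin_filter_topology:
  "openin (filter_topology Y) U \<longleftrightarrow> U \<subseteq> Y \<and> (\<forall>F\<in>U. \<exists>A\<in>F. basic_nbhd F A \<subseteq> U)"
  unfolding filter_topology_def by (simp only: topology_inverse'[OF istopology_basic_nbhd_opens])

lemma topspace_filter_topology [simp]: "topspace (filter_topology Y) = Y"
proof -
  have "openin (filter_topology Y) Y"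
    unfolding openin_filter_topology using UNIV_mem basic_nbhd_subset by blast
  then have "Y \<subseteq> topspace (filter_topology Y)"
    by (rule openin_subset)
  moreover have "topspace (filter_topology Y) \<subseteq> Y"
    unfolding topspace_def by (auto simp: openin_filter_topology)
  ultimately show ?thesis by blast
qed

lemma openin_basic_nbhd:
  assumes "F \<in> Y" "A \<in> F"
  shows "openin (filter_topology Y) (basic_nbhd F A)"
  unfolding openin_filter_topology
proof (intro conjI ballI)
  fix G assume "G \<in> basic_nbhd F A"
  then consider "G = F" | x where "G = principal_sets x" "x \<in> A"
    by (auto simp: mem_basic_nbhd)
  then show "\<exists>B\<in>G. basic_nbhd G B \<subseteq> basic_nbhd F A"
    by cases (use assms \<open>G \<in> basic_nbhd F A\<close> in auto)
qed (use assms basic_nbhd_subset in blast)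

lemma openin_principal_sets: "S \<subseteq> range principal_sets \<Longrightarrow> openin (filter_topology Y) S"
  unfolding openin_filter_topology using principal_sets_mem by fastforce

lemma disjoint_mem_sets:
  assumes "F \<in> Y" "G \<in> Y" "F \<noteq> G"
  obtains A B where "A \<in> F" "B \<in> G" "A \<inter> B = {}"
proof (cases "F \<in> range principal_sets")
  case True
  then obtain x where "F = principal_sets x" by blast
  then show ?thesis using that[of "{x}" "- {x}"] free assms by auto
next
  case F: False
  show ?thesis
  proof (cases "G \<in> range principal_sets")
    case True
    then obtain y where "G = principal_sets y" by blast
    then show ?thesis using that[of "- {y}" "{y}"] free assms by auto
  next
    case False
    then obtain A where "A \<in> F" "- A \<in> G" using separating F assms by metis
    then show ?thesis using that by blast
  qed
qed

lemma Hausdorff_filter_topology: "Hausdorff_space (filter_topology Y)"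
  unfolding Hausdorff_space_def disjnt_def topspace_filter_topology
proof (intro allI impI)
  fix F G assume FG: "F \<in> Y \<and> G \<in> Y \<and> F \<noteq> G"
  then obtain A B where AB: "A \<in> F" "B \<in> G" "A \<inter> B = {}"
    by (meson disjoint_mem_sets)
  show "\<exists>U V. openin (filter_topology Y) U \<and> openin (filter_topology Y) V \<and> F \<in> U \<and> G \<in> V
    \<and> U \<inter> V = {}"
    by (intro exI[of _ "basic_nbhd F A"] exI[of _ "basic_nbhd G B"])
      (simp add: FG AB openin_basic_nbhd basic_nbhd_disjoint mem_basic_nbhd)
qed

lemma closedin_basic_nbhd:
  assumes F: "F \<in> Y" "F \<notin> range principal_sets" "A \<in> F"
    and sep: "\<And>G. G \<in> Y \<Longrightarrow> G \<notin> range principal_sets \<Longrightarrow> G \<noteq> F \<Longrightarrow> \<exists>B\<in>G. A \<inter> B = {}"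
  shows "closedin (filter_topology Y) (basic_nbhd F A)"
  unfolding closedin_def topspace_filter_topology openin_filter_topology
proof (intro conjI ballI)
  show "basic_nbhd F A \<subseteq> Y" using F(1) by (rule basic_nbhd_subset)
  show "Y - basic_nbhd F A \<subseteq> Y" by (rule Diff_subset)
  fix G assume G: "G \<in> Y - basic_nbhd F A"
  then have "G \<noteq> F" by (auto simp: mem_basic_nbhd)
  have "\<exists>B\<in>G. A \<inter> B = {}"
  proof (cases "G \<in> range principal_sets")
    case True
    then obtain y where "G = principal_sets y" by blast
    with G F(2) have "y \<notin> A" by (auto simp: mem_basic_nbhd)
    then show ?thesis using \<open>G = principal_sets y\<close> by (intro bexI[of _ "{y}"]) auto
  next
    case False
    with G sep \<open>G \<noteq> F\<close> show ?thesis by simp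
  qed
  then obtain B where B: "B \<in> G" "A \<inter> B = {}" by blast
  have "basic_nbhd G B \<subseteq> Y - basic_nbhd F A"
    using basic_nbhd_disjoint[OF \<open>G \<noteq> F\<close>[symmetric] F(3) B] basic_nbhd_subset[of G B] G by auto
  with B(1) show "\<exists>B\<in>G. basic_nbhd G B \<subseteq> Y - basic_nbhd F A" by blast
qed

lemma zero_dimensional_filter_topology: "filter_topology Y dim_le 0"
  unfolding dimension_le_0_neighbourhood_base_of_clopen neighbourhood_base_of
proof (intro allI impI)
  fix W F assume "openin (filter_topology Y) W \<and> F \<in> W"
  then have F: "F \<in> Y" and "\<exists>A\<in>F. basic_nbhd F A \<subseteq> W"
    by (auto simp: openin_filter_topology)
  then obtain A where A: "A \<in> F" "basic_nbhd F A \<subseteq> W" by blast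
  show "\<exists>U V. openin (filter_topology Y) U \<and> (closedin (filter_topology Y) V \<and> openin (filter_topology Y) V)
    \<and> F \<in> U \<and> U \<subseteq> V \<and> V \<subseteq> W"
  proof (cases "F \<in> range principal_sets")
    case True
    then have "closedin (filter_topology Y) {F}" "openin (filter_topology Y) {F}"
      using F closedin_Hausdorff_singleton[OF Hausdorff_filter_topology] openin_principal_sets
      by auto
    moreover have "F \<in> W" using A by (auto simp: mem_basic_nbhd)
    ultimately show ?thesis by (intro exI[of _ "{F}"]) auto
  next
    case False
    then obtain A0 where A0: "A0 \<in> F" "\<forall>G\<in>Y. G \<notin> range principal_sets \<longrightarrow> G \<noteq> F \<longrightarrow> - A0 \<in> G"
      using separating F by blast
    let ?V = "basic_nbhd F (A \<inter> A0)"
    have "A \<inter> A0 \<in> F" using Int_mem F A A0 by blast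
    then have "closedin (filter_topology Y) ?V" "openin (filter_topology Y) ?V"
      using F False A0 by (auto intro!: closedin_basic_nbhd openin_basic_nbhd)
    moreover have "F \<in> ?V" "?V \<subseteq> W" using A basic_nbhd_mono[of "A \<inter> A0" A F]
      by (auto simp: mem_basic_nbhd)
    ultimately show ?thesis by (intro exI[of _ ?V]) auto
  qed
qed

lemma embedding_principal_sets:
  "embedding_map (discrete_topology UNIV) (filter_topology Y) principal_sets"
proof (rule injective_open_imp_embedding_map)
  show "continuous_map (discrete_topology UNIV) (filter_topology Y) principal_sets"
    using principal_sets_mem by simp
  show "open_map (discrete_topology UNIV) (filter_topology Y) principal_sets"
    unfolding open_map_def by (auto intro: openin_principal_sets)
qed (simp add: inj_principal_sets)

lemma not_closedin_principal_sets:
  assumes "F \<in> Y" "F \<notin> range principal_sets"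
  shows "\<not> closedin (filter_topology Y) (range principal_sets)"
proof
  assume "closedin (filter_topology Y) (range principal_sets)"
  then have "openin (filter_topology Y) (Y - range principal_sets)"
    by (simp add: closedin_def)
  then have "\<exists>A\<in>F. basic_nbhd F A \<subseteq> Y - range principal_sets"
    using assms by (auto simp: openin_filter_topology)
  then obtain A where A: "A \<in> F" "basic_nbhd F A \<subseteq> Y - range principal_sets" by blast
  then obtain x where "x \<in> A" using empty_not_mem assms(1) by (metis ex_in_conv)
  then have "principal_sets x \<in> basic_nbhd F A" using assms(2) by (auto simp: mem_basic_nbhd)
  then show False using A by blast
qed

end

definition index_selectors :: "(nat \<Rightarrow> nat \<Rightarrow> nat) set" where
  "index_selectors = {\<lambda>i j. i, \<lambda>i j. j, min, max}"

lemma index_selectors_cases: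
  assumes "g \<in> index_selectors"
  shows "g i j \<in> {i, j}"
    and "(\<forall>i\<ge>j. g i j = j) \<or> (\<forall>i\<ge>j. g i j = i)"
    and "(\<forall>j\<ge>i. g i j = i) \<or> (\<forall>j\<ge>i. g i j = j)"
proof -
  have "g = (\<lambda>i j. i) \<or> g = (\<lambda>i j. j) \<or> g = min \<or> g = max"
    using assms by (simp add: index_selectors_def)
  then consider "g = (\<lambda>i j. i)" | "g = (\<lambda>i j. j)" | "g = min" | "g = max"
    by argo
  then show "g i j \<in> {i, j}" "(\<forall>i\<ge>j. g i j = j) \<or> (\<forall>i\<ge>j. g i j = i)"
    "(\<forall>j\<ge>i. g i j = i) \<or> (\<forall>j\<ge>i. g i j = j)"
    by (cases; simp add: min_def max_def)+
qed

locale tail_semigroup =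
  fixes S :: "(nat \<Rightarrow> 'a::semigroup_mult) set"
  assumes const_mem: "(\<lambda>_. x) \<in> S"
    and mult_mem: "u \<in> S \<Longrightarrow> v \<in> S \<Longrightarrow> (\<lambda>j. u j * v j) \<in> S"
    and mult_pattern: "u \<in> S \<Longrightarrow> v \<in> S \<Longrightarrow>
      \<exists>g\<in>index_selectors. \<forall>i j. u i * v j = u (g i j) * v (g i j)"
    and frequently_eq_imp_eventually: "u \<in> S \<Longrightarrow>
      frequently (\<lambda>j. u j = x) sequentially \<Longrightarrow> eventually (\<lambda>j. u j = x) sequentially"
    and eventually_not_mem_range: "u \<in> S \<Longrightarrow> v \<in> S \<Longrightarrow>
      \<not> eventually (\<lambda>j. u j = v j) sequentially \<Longrightarrow>
      (\<And>x. \<not> eventually (\<lambda>j. v j = x) sequentially) \<Longrightarrow>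
      eventually (\<lambda>j. v j \<notin> range u) sequentially"
begin

sublocale filter_space "tail_sets ` S"
proof
  show "UNIV \<in> F" "{} \<notin> F" if "F \<in> tail_sets ` S" for F
    using that UNIV_mem_tail_sets empty_not_mem_tail_sets by auto
  show "A \<inter> B \<in> F" if "F \<in> tail_sets ` S" "A \<in> F" "B \<in> F" for F A B
    using that Int_mem_tail_sets by auto
  show "principal_sets x \<in> tail_sets ` S" for x
    using const_mem[of x] by (metis image_eqI tail_sets_const)
next
  fix F x assume "F \<in> tail_sets ` S" "F \<noteq> principal_sets x"
  then obtain u where u: "u \<in> S" "F = tail_sets u" by blast
  have "eventually (\<lambda>j. u j \<noteq> x) sequentially"
  proof (rule ccontr)
    assume "\<not> eventually (\<lambda>j. u j \<noteq> x) sequentially"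
    then have "eventually (\<lambda>j. u j = x) sequentially"
      using u(1) frequently_eq_imp_eventually by (simp add: frequently_def)
    then show False using u \<open>F \<noteq> principal_sets x\<close> by (simp add: tail_sets_eq_principal_sets_iff)
  qed
  then show "- {x} \<in> F" using u(2) by (simp add: tail_sets_def)
next
  fix F assume F: "F \<in> tail_sets ` S" "F \<notin> range principal_sets"
  then obtain u where u: "u \<in> S" "F = tail_sets u" by blast
  have "- range u \<in> G" if G: "G \<in> tail_sets ` S" "G \<notin> range principal_sets" "G \<noteq> F" for G
  proof -
    obtain v where v: "v \<in> S" "G = tail_sets v" using G(1) by blast
    have "\<not> eventually (\<lambda>j. v j = x) sequentially" for x
    proof
      assume "eventually (\<lambda>j. v j = x) sequentially"
      then have "G = principal_sets x" using v(2) by (simp add: tail_sets_eq_principal_sets_iff)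
      with G(2) show False by blast
    qed
    moreover have "\<not> eventually (\<lambda>j. u j = v j) sequentially"
    proof
      assume "eventually (\<lambda>j. u j = v j) sequentially"
      then have "F = G" using u(2) v(2) by (simp add: tail_sets_cong)
      with G(3) show False by simp
    qed
    ultimately show ?thesis
      using eventually_not_mem_range[OF u(1) v(1)] v(2) by (simp add: tail_sets_def)
  qed
  moreover have "range u \<in> F" using u(2) by (simp add: tail_sets_def)
  ultimately show "\<exists>A\<in>F. \<forall>G\<in>tail_sets ` S. G \<notin> range principal_sets \<longrightarrow> G \<noteq> F \<longrightarrow> - A \<in> G"
    by blast
qed

abbreviation germ_topology :: "'a set set topology" where
  "germ_topology \<equiv> filter_topology (tail_sets ` S)"

lemma sets_mult_tail_sets_of_mem:
  assumes "u \<in> S" "v \<in> S"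
  shows "sets_mult (tail_sets u) (tail_sets v) = tail_sets (\<lambda>j. u j * v j)"
proof (rule sets_mult_tail_sets)
  fix i j
  obtain g where g: "g \<in> index_selectors"
    and gw: "\<forall>i j. u i * v j = u (g i j) * v (g i j)"
    using mult_pattern[OF assms] by blast
  have "g i j \<in> {i, j}" using index_selectors_cases(1)[OF g] .
  then show "u i * v j \<in> {u i * v i, u j * v j}"
    using gw[rule_format, of i j] by auto
qed

lemma sets_mult_mem: "F \<in> tail_sets ` S \<Longrightarrow> G \<in> tail_sets ` S \<Longrightarrow> sets_mult F G \<in> tail_sets ` S"
  using sets_mult_tail_sets_of_mem mult_mem by blast

lemma sets_mult_assoc:
  assumes "F \<in> tail_sets ` S" "G \<in> tail_sets ` S" "H \<in> tail_sets ` S"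
  shows "sets_mult (sets_mult F G) H = sets_mult F (sets_mult G H)"
proof -
  obtain u v w where "u \<in> S" "v \<in> S" "w \<in> S" "F = tail_sets u" "G = tail_sets v" "H = tail_sets w"
    using assms by blast
  then show ?thesis by (simp add: sets_mult_tail_sets_of_mem mult_mem mult.assoc)
qed

lemma sets_mult_basic_nbhd:
  assumes "u \<in> S" "v \<in> S"
    and F: "F \<in> basic_nbhd (tail_sets u) (u ` {K..})"
    and G: "G \<in> basic_nbhd (tail_sets v) (v ` {K..})"
  shows "sets_mult F G \<in> insert (tail_sets (\<lambda>j. u j * v j)) (principal_sets ` (\<lambda>j. u j * v j) ` {K..})"
proof -
  define w where "w = (\<lambda>j. u j * v j)"
  obtain g where g: "g \<in> index_selectors" and gw: "\<And>i j. u i * v j = w (g i j)"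
    using mult_pattern[OF assms(1,2)] unfolding w_def by blast
  have ge: "g i j \<ge> K" if "i \<ge> K" "j \<ge> K" for i j
    using index_selectors_cases(1)[OF g, of i j] that by auto
  from F consider (tail) "F = tail_sets u" | (point) i where "i \<ge> K" "F = principal_sets (u i)"
    by (auto simp: mem_basic_nbhd)
  then have "sets_mult F G \<in> insert (tail_sets w) (principal_sets ` w ` {K..})"
  proof cases
    case tail
    from G consider "G = tail_sets v" | j where "j \<ge> K" "G = principal_sets (v j)"
      by (auto simp: mem_basic_nbhd)
    then show ?thesis
    proof cases
      case 1
      then show ?thesis using tail sets_mult_tail_sets_of_mem assms(1,2) by (simp add: w_def)
    next
      case (2 j)
      then have "sets_mult F G = tail_sets (\<lambda>i. w (g i j))"
        using tail gw by (simp add: sets_mult_tail_sets_principal_sets)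
      moreover have "tail_sets (\<lambda>i. w (g i j)) \<in> {principal_sets (w j), tail_sets w}"
        by (rule tail_sets_reindex[OF index_selectors_cases(2)[OF g]])
      ultimately show ?thesis using 2 by auto
    qed
  next
    case (point i)
    from G consider "G = tail_sets v" | j where "j \<ge> K" "G = principal_sets (v j)"
      by (auto simp: mem_basic_nbhd)
    then show ?thesis
    proof cases
      case 1
      then have "sets_mult F G = tail_sets (\<lambda>j. w (g i j))"
        using point gw by (simp add: sets_mult_principal_sets_tail_sets)
      moreover have "tail_sets (\<lambda>j. w (g i j)) \<in> {principal_sets (w i), tail_sets w}"
        by (rule tail_sets_reindex[OF index_selectors_cases(3)[OF g]])
      ultimately show ?thesis using point by auto
    next
      case (2 j)
      then have "sets_mult F G = principal_sets (w (g i j))"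
        using point gw by (simp add: sets_mult_principal_sets)
      then show ?thesis using ge point 2 by auto
    qed
  qed
  then show ?thesis by (simp add: w_def)
qed

lemma sets_mult_nbhds:
  assumes F: "F \<in> tail_sets ` S" and G: "G \<in> tail_sets ` S"
    and V: "openin germ_topology V" "sets_mult F G \<in> V"
  obtains U1 U2 where "openin germ_topology U1" "openin germ_topology U2" "F \<in> U1" "G \<in> U2"
    "\<And>F' G'. F' \<in> U1 \<Longrightarrow> G' \<in> U2 \<Longrightarrow> sets_mult F' G' \<in> V"
proof -
  obtain u v where u: "u \<in> S" "F = tail_sets u" and v: "v \<in> S" "G = tail_sets v"
    using F G by blast
  define w where "w = (\<lambda>j. u j * v j)"
  have FG: "sets_mult F G = tail_sets w"
    using u v by (simp add: sets_mult_tail_sets_of_mem w_def)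
  then have "\<exists>A\<in>tail_sets w. basic_nbhd (tail_sets w) A \<subseteq> V"
    using V by (simp add: openin_filter_topology)
  then obtain A where A: "A \<in> tail_sets w" "basic_nbhd (tail_sets w) A \<subseteq> V" by blast
  obtain K where "\<forall>k\<ge>K. principal_sets (w k) \<in> basic_nbhd (tail_sets w) A"
    using eventually_principal_sets_mem_basic_nbhd[OF A(1)] by blast
  with A(2) have KV: "insert (tail_sets w) (principal_sets ` w ` {K..}) \<subseteq> V"
    by (auto simp: mem_basic_nbhd)
  show ?thesis
  proof (rule that)
    show "openin germ_topology (basic_nbhd F (u ` {K..}))" "openin germ_topology (basic_nbhd G (v ` {K..}))"
      using F G u(2) v(2) by (simp_all add: openin_basic_nbhd image_atLeast_mem_tail_sets)
    show "F \<in> basic_nbhd F (u ` {K..})" "G \<in> basic_nbhd G (v ` {K..})"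
      by (simp_all add: mem_basic_nbhd)
    show "sets_mult F' G' \<in> V"
      if "F' \<in> basic_nbhd F (u ` {K..})" "G' \<in> basic_nbhd G (v ` {K..})" for F' G'
    proof (rule subsetD[OF KV])
      show "sets_mult F' G' \<in> insert (tail_sets w) (principal_sets ` w ` {K..})"
        using sets_mult_basic_nbhd[OF u(1) v(1)] that unfolding u(2) v(2) w_def .
    qed
  qed
qed

lemma continuous_map_sets_mult:
  "continuous_map (prod_topology germ_topology germ_topology) germ_topology (\<lambda>(F, G). sets_mult F G)"
  unfolding continuous_map_def topspace_prod_topology topspace_filter_topology
proof (intro conjI allI impI)
  show "(\<lambda>(F, G). sets_mult F G) \<in> tail_sets ` S \<times> tail_sets ` S \<rightarrow> tail_sets ` S"
    using sets_mult_mem by auto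
  fix V assume V: "openin germ_topology V"
  show "openin (prod_topology germ_topology germ_topology)
    {x \<in> tail_sets ` S \<times> tail_sets ` S. (case x of (F, G) \<Rightarrow> sets_mult F G) \<in> V}"
    unfolding openin_prod_topology_alt
  proof (intro allI impI)
    fix F G assume "(F, G) \<in> {x \<in> tail_sets ` S \<times> tail_sets ` S. (case x of (F, G) \<Rightarrow> sets_mult F G) \<in> V}"
    then have FG: "F \<in> tail_sets ` S" "G \<in> tail_sets ` S" "sets_mult F G \<in> V" by auto
    obtain U1 U2 where U: "openin germ_topology U1" "openin germ_topology U2" "F \<in> U1" "G \<in> U2"
      and UV: "\<And>F' G'. F' \<in> U1 \<Longrightarrow> G' \<in> U2 \<Longrightarrow> sets_mult F' G' \<in> V"
      using sets_mult_nbhds[OF FG(1,2) V FG(3)] by metis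
    have "U1 \<times> U2 \<subseteq> {x \<in> tail_sets ` S \<times> tail_sets ` S. (case x of (F, G) \<Rightarrow> sets_mult F G) \<in> V}"
    proof -
      have "U1 \<subseteq> tail_sets ` S" "U2 \<subseteq> tail_sets ` S"
        using U(1,2) by (simp_all add: openin_filter_topology)
      then show ?thesis using UV by auto
    qed
    with U show "\<exists>U1 U2. openin germ_topology U1 \<and> openin germ_topology U2 \<and> F \<in> U1 \<and> G \<in> U2
      \<and> U1 \<times> U2 \<subseteq> {x \<in> tail_sets ` S \<times> tail_sets ` S. (case x of (F, G) \<Rightarrow> sets_mult F G) \<in> V}"
      by (intro exI[of _ U1] exI[of _ U2]) simp
  qed
qed

lemma TzS_semigroup_germ_topology: "TzS_semigroup germ_topology sets_mult"
  unfolding TzS_semigroup_def topological_semigroup_def topspace_filter_topology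
  using sets_mult_mem sets_mult_assoc continuous_map_sets_mult Hausdorff_filter_topology
    zero_dimensional_filter_topology
  by simp

theorem not_TzS_closed:
  assumes "u \<in> S" "\<And>x. \<not> eventually (\<lambda>j. u j = x) sequentially"
  shows "\<not> TzS_closed TYPE('a)"
proof
  assume "TzS_closed TYPE('a)"
  moreover have "range principal_sets \<subseteq> topspace germ_topology"
    using principal_sets_mem by auto
  ultimately have "closedin germ_topology (range principal_sets)"
    unfolding TzS_closed_def TzS_closed_in_def
    using TzS_semigroup_germ_topology inj_principal_sets embedding_principal_sets
      sets_mult_principal_sets[symmetric]
    by blast
  moreover have "tail_sets u \<notin> range principal_sets"
    using assms(2) by (auto simp: tail_sets_eq_principal_sets_iff)
  ultimately show False
    using not_closedin_principal_sets assms(1) by blast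
qed

end

lemma eventually_if_frequently_convex:
  assumes convex: "\<And>k l m. P k \<Longrightarrow> P m \<Longrightarrow> k \<le> l \<Longrightarrow> l \<le> m \<Longrightarrow> P l"
    and "frequently P sequentially"
  shows "eventually P sequentially"
proof -
  obtain k where "P k" using assms(2) by (auto simp: frequently_sequentially)
  have "P l" if "l \<ge> k" for l
  proof -
    obtain m where "m \<ge> l" "P m" using assms(2) by (auto simp: frequently_sequentially)
    then show "P l" using convex[OF \<open>P k\<close>] that by blast
  qed
  then show ?thesis by (auto simp: eventually_sequentially)
qed

locale idempotent_chain =
  fixes e :: "nat \<Rightarrow> 'a::semigroup_mult" and sel :: "nat \<Rightarrow> nat \<Rightarrow> nat"
  assumes e_central: "x * e j = e j * x"
    and sel_min_max: "sel = min \<or> sel = max"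
    and e_mult: "e i * e j = e (sel i j)"
begin

definition absorbing :: "(nat \<Rightarrow> 'a) \<Rightarrow> bool" where
  "absorbing s \<longleftrightarrow> (\<forall>i j. s i * e j = s (sel i j))"

lemma absorbingD: "absorbing s \<Longrightarrow> s i * e j = s (sel i j)"
  by (simp add: absorbing_def)

lemma sel_idem: "sel i i = i"
  and sel_commute: "sel i j = sel j i"
  and sel_absorb: "sel i (sel i j) = sel i j" "sel j (sel i j) = sel i j"
  using sel_min_max by (auto simp: min_def max_def split: if_splits)

lemma absorbing_e: "absorbing e"
  by (simp add: absorbing_def e_mult)

lemma absorbing_self: "absorbing s \<Longrightarrow> s i * e i = s i"
  using absorbingD[of s i i] by (simp add: sel_idem)

lemma absorbing_mult_pattern:
  assumes "absorbing s" "absorbing t"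
  shows "s i * t k = s (sel i k) * t (sel i k)"
proof -
  let ?m = "sel i k"
  have "s i * t k = s i * (e i * t k) * e k"
    using absorbing_self[OF assms(1), of i] absorbing_self[OF assms(2), of k]
    by (metis mult.assoc)
  also have "\<dots> = s i * t k * (e i * e k)"
    by (simp only: e_central[of "t k" i, symmetric] mult.assoc)
  also have "\<dots> = s i * t ?m"
    using absorbingD[OF assms(2), of k ?m] by (simp add: e_mult sel_absorb mult.assoc)
  also have "\<dots> = s i * e ?m * t ?m"
    using absorbing_self[OF assms(2), of ?m] by (simp only: e_central[of "t ?m" ?m] mult.assoc)
  also have "\<dots> = s ?m * t ?m"
    using absorbingD[OF assms(1), of i ?m] by (simp add: sel_absorb)
  finally show ?thesis .
qed

lemma absorbing_mult: "absorbing s \<Longrightarrow> absorbing t \<Longrightarrow> absorbing (\<lambda>j. s j * t j)"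
  unfolding absorbing_def
  by (metis absorbing_def absorbing_mult_pattern mult.assoc sel_absorb(1))

lemma absorbing_const_mult: "absorbing t \<Longrightarrow> absorbing (\<lambda>j. x * t j)"
  by (simp add: absorbing_def mult.assoc)

lemma absorbing_mult_const:
  assumes "absorbing s"
  shows "absorbing (\<lambda>j. s j * x)"
  unfolding absorbing_def
proof (intro allI)
  fix i j
  have "s i * x * e j = s i * e j * x" by (simp add: mult.assoc e_central)
  then show "s i * x * e j = s (sel i j) * x" using absorbingD[OF assms] by simp
qed

lemma absorbing_eq_between:
  assumes "absorbing s" "absorbing t" "s k = t k" "s m = t m" "k \<le> l" "l \<le> m"
  shows "s l = t l"
proof -
  obtain n where "n \<in> {k, m}" "sel n l = l"
  proof (cases "sel = min")
    case True
    then show ?thesis using that[of m] assms(6) by simp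
  next
    case False
    then show ?thesis using that[of k] assms(5) sel_min_max by simp
  qed
  then have "s l = s n * e l" "t l = t n * e l"
    using absorbingD[OF assms(1)] absorbingD[OF assms(2)] by simp_all
  with \<open>n \<in> {k, m}\<close> assms(3,4) show ?thesis by auto
qed

lemma absorbing_const_between:
  assumes "absorbing s" "s k = s m" "k \<le> l" "l \<le> m"
  shows "s l = s k"
proof -
  obtain n n' where "{n, n'} = {k, m}" "sel n l = l" "sel n' l = n'"
  proof (cases "sel = min")
    case True
    then show ?thesis using that[of m k] assms(3,4) by (simp add: insert_commute)
  next
    case False
    then show ?thesis using that[of k m] assms(3,4) sel_min_max by simp
  qed
  then have "s l = s n * e l" "s n' = s n' * e l"
    using absorbingD[OF assms(1)] by simp_all
  moreover have "s n = s k" "s n' = s k" using \<open>{n, n'} = {k, m}\<close> assms(2) by auto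
  ultimately show ?thesis by simp
qed

lemma absorbing_frequently_const:
  assumes "absorbing s" "frequently (\<lambda>j. s j = x) sequentially"
  shows "eventually (\<lambda>j. s j = x) sequentially"
proof (rule eventually_if_frequently_convex[OF _ assms(2)])
  fix k l m assume "s k = x" "s m = x" "k \<le> l" "l \<le> m"
  then show "s l = x" using absorbing_const_between[OF assms(1), of k m l] by simp
qed

lemma absorbing_frequently_eq:
  assumes "absorbing s" "absorbing t" "frequently (\<lambda>j. s j = t j) sequentially"
  shows "eventually (\<lambda>j. s j = t j) sequentially"
  using absorbing_eq_between[OF assms(1,2)] by (rule eventually_if_frequently_convex[OF _ assms(3)])

lemma absorbing_coincidence:
  assumes "absorbing s" "absorbing t" "t j = s i"
  shows "s (sel i j) = t (sel i j)" "t (sel i j) = t j"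
proof -
  have "s (sel i j) = t j * e j"
    using absorbingD[OF assms(1), of i j] assms(3) by simp
  also have "\<dots> = t j" by (rule absorbing_self[OF assms(2)])
  finally have s_eq: "s (sel i j) = t j" .
  have "t (sel i j) = s i * e i"
    using absorbingD[OF assms(2), of j i] assms(3) by (simp add: sel_commute)
  also have "\<dots> = t j" using absorbing_self[OF assms(1)] assms(3) by simp
  finally show "t (sel i j) = t j" .
  with s_eq show "s (sel i j) = t (sel i j)" by simp
qed

lemma absorbing_eventually_not_mem_range:
  assumes "absorbing s" "absorbing t"
    and ne: "\<not> eventually (\<lambda>j. s j = t j) sequentially"
    and nc: "\<And>x. \<not> eventually (\<lambda>j. t j = x) sequentially"
  shows "eventually (\<lambda>j. t j \<notin> range s) sequentially"
proof (rule ccontr)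
  assume "\<not> eventually (\<lambda>j. t j \<notin> range s) sequentially"
  then have freq: "frequently (\<lambda>j. t j \<in> range s) sequentially"
    by (simp add: frequently_def)
  have "\<not> frequently (\<lambda>j. s j = t j) sequentially"
    using absorbing_frequently_eq[OF assms(1,2)] ne by blast
  then obtain K where K: "\<And>k. k \<ge> K \<Longrightarrow> s k \<noteq> t k"
    by (auto simp: frequently_sequentially)
  have early: "t j \<in> t ` {..<K}" if j: "t j \<in> range s" for j
  proof -
    obtain i where "t j = s i" using j by blast
    note coin = absorbing_coincidence[OF assms(1,2) this]
    then have "sel i j < K" using K not_le by metis
    with coin(2) show ?thesis by (metis image_eqI lessThan_iff)
  qed
  have "frequently (\<lambda>j. \<exists>x\<in>t ` {..<K}. t j = x) sequentially"
    using freq by (rule frequently_elim1) (use early in blast)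
  then have "\<exists>x\<in>t ` {..<K}. frequently (\<lambda>j. t j = x) sequentially"
    by (rule frequently_bex_finite[rotated]) simp
  then obtain x where "frequently (\<lambda>j. t j = x) sequentially" by blast
  then show False
    using absorbing_frequently_const[OF assms(2)] nc by blast
qed

definition chain_seqs :: "(nat \<Rightarrow> 'a) set" where
  "chain_seqs = range (\<lambda>x _. x) \<union> Collect absorbing"

lemma chain_seqs_cases:
  assumes "u \<in> chain_seqs"
  obtains (const) x where "u = (\<lambda>_. x)" | (absorbing) "absorbing u"
  using assms by (auto simp: chain_seqs_def)

lemma tail_semigroup_chain_seqs: "tail_semigroup chain_seqs"
proof
  show "(\<lambda>_. x) \<in> chain_seqs" for x by (simp add: chain_seqs_def)
next
  fix u v assume u: "u \<in> chain_seqs" and v: "v \<in> chain_seqs"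
  show "(\<lambda>j. u j * v j) \<in> chain_seqs"
    using u v by (cases rule: chain_seqs_cases; cases rule: chain_seqs_cases)
      (auto simp: chain_seqs_def absorbing_mult absorbing_const_mult absorbing_mult_const)
  show "\<exists>g\<in>index_selectors. \<forall>i j. u i * v j = u (g i j) * v (g i j)"
  using v proof (cases rule: chain_seqs_cases)
    case (const y)
    show ?thesis
      by (rule bexI[of _ "\<lambda>i j. i"]) (simp_all add: const index_selectors_def)
  next
    case absorbing_v: absorbing
    show ?thesis
    using u proof (cases rule: chain_seqs_cases)
      case (const x)
      show ?thesis
        by (rule bexI[of _ "\<lambda>i j. j"]) (simp_all add: const index_selectors_def)
    next
      case absorbing
      have "sel \<in> index_selectors" using sel_min_max by (auto simp: index_selectors_def)
      then show ?thesis
        using absorbing_mult_pattern[OF absorbing absorbing_v] by blast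
    qed
  qed
next
  fix u x assume "u \<in> chain_seqs" "frequently (\<lambda>j. u j = x) sequentially"
  then show "eventually (\<lambda>j. u j = x) sequentially"
    by (cases rule: chain_seqs_cases) (auto simp: absorbing_frequently_const)
next
  fix u v assume u: "u \<in> chain_seqs" and v: "v \<in> chain_seqs"
    and ne: "\<not> eventually (\<lambda>j. u j = v j) sequentially"
    and nc: "\<And>x. \<not> eventually (\<lambda>j. v j = x) sequentially"
  from v nc have "absorbing v"
    by (cases rule: chain_seqs_cases) auto
  from u show "eventually (\<lambda>j. v j \<notin> range u) sequentially"
  proof (cases rule: chain_seqs_cases)
    case (const x)
    have "\<not> frequently (\<lambda>j. v j = x) sequentially"
      using absorbing_frequently_const[OF \<open>absorbing v\<close>] nc by blast
    then show ?thesis using const by (simp add: not_frequently)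
  next
    case absorbing
    then show ?thesis
      using \<open>absorbing v\<close> ne nc by (rule absorbing_eventually_not_mem_range)
  qed
qed

theorem inj_imp_not_TzS_closed:
  assumes "inj e"
  shows "\<not> TzS_closed TYPE('a)"
proof -
  interpret tail_semigroup chain_seqs by (rule tail_semigroup_chain_seqs)
  have "\<not> eventually (\<lambda>j. e j = x) sequentially" for x
  proof
    assume "eventually (\<lambda>j. e j = x) sequentially"
    then obtain K where "\<forall>k\<ge>K. e k = x" by (auto simp: eventually_sequentially)
    then have "e K = e (Suc K)" by simp
    then show False using assms by (auto dest: injD)
  qed
  moreover have "e \<in> chain_seqs" by (simp add: chain_seqs_def absorbing_e)
  ultimately show ?thesis by (rule not_TzS_closed[rotated])
qed

end

lemma infinite_chain_imp_idempotent_chain: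
  fixes C :: "'a::semigroup_mult set"
  assumes "C \<subseteq> center" "is_chain C" "infinite C"
  obtains e :: "nat \<Rightarrow> 'a" and sel where "inj e" "idempotent_chain e sel"
proof -
  obtain f :: "nat \<Rightarrow> 'a" where f: "inj f" "range f \<subseteq> C"
    using infinite_countable_subset[OF assms(3)] by blast
  define colour where "colour S = (if f (Min S) * f (Max S) = f (Min S) then 0 else 1::nat)" for S
  have "\<exists>Z t. Z \<subseteq> UNIV \<and> infinite Z \<and> t < 2 \<and> (\<forall>x\<in>Z. \<forall>y\<in>Z. x \<noteq> y \<longrightarrow> colour {x, y} = t)"
    by (rule Ramsey2) (auto simp: colour_def)
  then obtain Z t where Z: "infinite Z" "t < 2"
    and hom: "\<And>x y. x \<in> Z \<Longrightarrow> y \<in> Z \<Longrightarrow> x \<noteq> y \<Longrightarrow> colour {x, y} = t"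
    by blast
  define e where "e = f \<circ> enumerate Z"
  define sel :: "nat \<Rightarrow> nat \<Rightarrow> nat" where "sel = (if t = 0 then min else max)"
  have mono: "strict_mono (enumerate Z)" using strict_mono_enumerate[OF Z(1)] .
  have eC: "e n \<in> C" for n using f(2) by (auto simp: e_def)
  have central: "x * e j = e j * x" for x j
    using eC[of j] assms(1) by (auto simp: center_def)
  have lt: "e i * e j = e (sel i j)" if "i < j" for i j
  proof -
    have "enumerate Z i < enumerate Z j" using mono that by (simp add: strict_mono_less)
    then have "colour {enumerate Z i, enumerate Z j} = t"
      using hom enumerate_in_set[OF Z(1)] by simp
    with \<open>enumerate Z i < enumerate Z j\<close> have "e i * e j = e i \<longleftrightarrow> t = 0"
      by (auto simp: colour_def e_def split: if_splits)
    moreover have "e i * e j \<in> {e i, e j}"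
      using eC[of i] eC[of j] assms(2) by (auto simp: is_chain_def)
    ultimately show ?thesis
      using that by (auto simp: sel_def)
  qed
  have e_mult: "e i * e j = e (sel i j)" for i j
  proof (cases i j rule: linorder_cases)
    case equal
    have "e i * e i \<in> {e i}" using eC[of i] assms(2) by (auto simp: is_chain_def)
    then show ?thesis using equal by (simp add: sel_def)
  next
    case greater
    have "e i * e j = e j * e i" by (rule central)
    with lt[OF greater] show ?thesis by (simp add: sel_def min.commute max.commute)
  qed (rule lt)
  have chain: "idempotent_chain e sel"
  proof
    show "x * e j = e j * x" for x j by (rule central)
    show "sel = min \<or> sel = max" by (simp add: sel_def)
    show "e i * e j = e (sel i j)" for i j by (rule e_mult)
  qed
  have "inj e"
    unfolding e_def using f(1) strict_mono_imp_inj_on[OF mono] by (simp add: inj_compose)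
  then show ?thesis using chain by (rule that)
qed

theorem lemma5p1:
  assumes "TzS_closed TYPE('a::semigroup_mult)"
  shows "chain_finite (center :: 'a set)"
proof (rule ccontr)
  assume "\<not> chain_finite (center :: 'a set)"
  then obtain C :: "'a set" where "C \<subseteq> center" "is_chain C" "infinite C"
    by (auto simp: chain_finite_def)
  then obtain e :: "nat \<Rightarrow> 'a" and sel where "inj e" "idempotent_chain e sel"
    by (rule infinite_chain_imp_idempotent_chain)
  then show False
    using idempotent_chain.inj_imp_not_TzS_closed assms by blast
qed

end
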